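(* Let $\lambda>0$, let $K(\sigma,\tau)=\exp(-\lambda d(\sigma,\tau))$ on $S_n$ with RKHS $\mathcal H$ and feature map $\phi:S_n\to\mathcal H$ (so $\langle\phi(\sigma),\phi(\tau)\rangle_{\mathcal H}=K(\sigma,\tau)$). Let $R\subseteq S_n$ be a top-$k$ partial ranking, $p$ the uniform distribution on $R$, and $\mu_p=\frac1{|R|}\sum_{\sigma\in R}\phi(\sigma)$. Then for every $\sigma_1\in R$, the function $$\sigma_2\mapsto\Big\|\mu_p-\tfrac12\big(\phi(\sigma_1)+\phi(\sigma_2)\big)\Big\|_{\mathcal H}^2,\qquad\sigma_2\in R,$$ has a unique minimiser over $R$, namely $\sigma_2=A_R(\sigma_1)$. That is, the second step of kernel herding for $p$ started from any $\sigma_1\in R$ produces exactly the antithetic sample of $\sigma_1$.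
   Context: $S_n$ is the symmetric group on $[n]$; $\sigma\in S_n$ is identified with the full ranking $\sigma(1)\succ\cdots\succ\sigma(n)$. For distinct items $x,y$, $\{x,y\}$ is discordant for $\sigma,\tau$ if $(\sigma^{-1}(x)-\sigma^{-1}(y))(\tau^{-1}(x)-\tau^{-1}(y))<0$. The Kendall distance $d(\sigma,\tau)$ is the number of unordered discordant pairs; $K$ is a positive definite kernel. For $0\le k\le n$ and distinct $a_1,\dots,a_k\in[n]$, the top-$k$ partial ranking is the set $R=\{\sigma\in S_n:\sigma(i)=a_i,\ i\le k\}$. The antithetic operator $A_R:R\to R$ is $A_R(\sigma)(i)=a_i$ for $i\le k$ and $A_R(\sigma)(k+j)=\sigma(n+1-j)$ for $j=1,\dots,n-k$. *)

theory Defs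
  imports "HOL-Analysis.Analysis" "HOL-Combinatorics.Permutations"
begin

text \<open>A full ranking on [n] = {1..n} is a permutation sigma (sigma permutes {1..n});
  sigma i is the item in position i, inv sigma x is the position of item x.\<close>

definition discordant :: "(nat \<Rightarrow> nat) \<Rightarrow> (nat \<Rightarrow> nat) \<Rightarrow> nat \<Rightarrow> nat \<Rightarrow> bool" where
  "discordant \<sigma> \<tau> x y \<longleftrightarrow>
     (int (inv \<sigma> x) - int (inv \<sigma> y)) * (int (inv \<tau> x) - int (inv \<tau> y)) < 0"

definition kendall :: "nat \<Rightarrow> (nat \<Rightarrow> nat) \<Rightarrow> (nat \<Rightarrow> nat) \<Rightarrow> nat" where
  "kendall n \<sigma> \<tau> = card {(x, y). x \<in> {1..n} \<and> y \<in> {1..n} \<and> x < y \<and> discordant \<sigma> \<tau> x y}"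

definition mallows_kernel :: "real \<Rightarrow> nat \<Rightarrow> (nat \<Rightarrow> nat) \<Rightarrow> (nat \<Rightarrow> nat) \<Rightarrow> real" where
  "mallows_kernel lam n \<sigma> \<tau> = exp (- lam * real (kendall n \<sigma> \<tau>))"

definition top_k :: "nat \<Rightarrow> nat \<Rightarrow> (nat \<Rightarrow> nat) \<Rightarrow> (nat \<Rightarrow> nat) set" where
  "top_k n k a = {\<sigma>. \<sigma> permutes {1..n} \<and> (\<forall>i\<in>{1..k}. \<sigma> i = a i)}"

definition antithetic :: "nat \<Rightarrow> nat \<Rightarrow> (nat \<Rightarrow> nat) \<Rightarrow> (nat \<Rightarrow> nat) \<Rightarrow> (nat \<Rightarrow> nat)" where
  "antithetic n k a \<sigma> = (\<lambda>i. if 1 \<le> i \<and> i \<le> k then a i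
                              else if k < i \<and> i \<le> n then \<sigma> (n + k + 1 - i)
                              else i)"

end

theory Submission
  imports Defs
begin

(* For tau in R, left multiplication by tau o inv sigma1 permutes R and preserves the Kendall
   distance, so <mu, phi tau> is the same for every tau in R. Expanding the herding objective then
   leaves K(sigma1, sigma2) / 2 plus a constant, so its minimisers are the members of R farthest
   from sigma1. Two rankings in R agree on the top k items, so only pairs of unranked items can be
   discordant; the antithetic ranking reverses the order of the unranked items and is the only
   member of R discordant with sigma1 on all of them. *)

lemma not_discordant_self: "\<not> discordant \<sigma> \<sigma> x y"
  unfolding discordant_def by (simp add: not_less)

lemma not_discordant_same_item: "\<not> discordant \<sigma> \<tau> x x"
  unfolding discordant_def by simp

lemma discordant_commute: "discordant \<sigma> \<tau> x y \<longleftrightarrow> discordant \<sigma> \<tau> y x"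
  unfolding discordant_def by (smt (verit) mult_minus_left mult_minus_right)

lemma kendall_self: "kendall n \<sigma> \<sigma> = 0"
  unfolding kendall_def by (simp add: not_discordant_self)

(* Ordered pairs, unlike pairs with x < y, are carried to ordered pairs by relabelling the items. *)
lemma double_kendall:
  "2 * kendall n \<sigma> \<tau> = card {(x, y). x \<in> {1..n} \<and> y \<in> {1..n} \<and> discordant \<sigma> \<tau> x y}"
proof -
  let ?L = "{(x, y). x \<in> {1..n} \<and> y \<in> {1..n} \<and> x < y \<and> discordant \<sigma> \<tau> x y}"
  let ?G = "{(x, y). x \<in> {1..n} \<and> y \<in> {1..n} \<and> y < x \<and> discordant \<sigma> \<tau> x y}"
  have finite: "finite ?L" "finite ?G"
    by (rule finite_subset[of _ "{1..n} \<times> {1..n}"], auto)+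
  have "?G = prod.swap ` ?L"
    by (auto simp: image_iff discordant_commute)
  then have "card ?G = card ?L"
    by (simp add: card_image)
  moreover have "{(x, y). x \<in> {1..n} \<and> y \<in> {1..n} \<and> discordant \<sigma> \<tau> x y} = ?L \<union> ?G"
    using not_discordant_same_item[of \<sigma> \<tau>] by (auto simp: not_less le_less)
  ultimately show ?thesis
    unfolding kendall_def using finite by (simp add: card_Un_disjoint disjoint_iff)
qed

lemma discordant_comp_left:
  assumes "bij \<pi>" "bij \<sigma>" "bij \<tau>"
  shows "discordant (\<pi> \<circ> \<sigma>) (\<pi> \<circ> \<tau>) (\<pi> x) (\<pi> y) \<longleftrightarrow> discordant \<sigma> \<tau> x y"
  using assms by (simp add: discordant_def o_inv_distrib bij_is_inj)

lemma kendall_comp_left: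
  assumes \<pi>: "\<pi> permutes {1..n}" and "\<sigma> permutes {1..n}" "\<tau> permutes {1..n}"
  shows "kendall n (\<pi> \<circ> \<sigma>) (\<pi> \<circ> \<tau>) = kendall n \<sigma> \<tau>"
proof -
  let ?D = "\<lambda>\<sigma> \<tau>. {(x, y). x \<in> {1..n} \<and> y \<in> {1..n} \<and> discordant \<sigma> \<tau> x y}"
  have inj: "inj (map_prod \<pi> \<pi>)"
    by (intro prod.inj_map permutes_inj[OF \<pi>])
  have disc: "discordant (\<pi> \<circ> \<sigma>) (\<pi> \<circ> \<tau>) (\<pi> x) (\<pi> y) \<longleftrightarrow> discordant \<sigma> \<tau> x y" for x y
    using assms by (intro discordant_comp_left permutes_bij)
  have "z \<in> ?D (\<pi> \<circ> \<sigma>) (\<pi> \<circ> \<tau>) \<longleftrightarrow> z \<in> map_prod \<pi> \<pi> ` ?D \<sigma> \<tau>" for z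
  proof -
    obtain x y where z: "z = map_prod \<pi> \<pi> (x, y)"
      using surjD[OF permutes_surj[OF \<pi>]] by (metis surj_pair map_prod_simp)
    show ?thesis
      unfolding z inj_image_mem_iff[OF inj]
      by (simp only: map_prod_simp mem_Collect_eq prod.case disc permutes_in_image[OF \<pi>])
  qed
  then have "?D (\<pi> \<circ> \<sigma>) (\<pi> \<circ> \<tau>) = map_prod \<pi> \<pi> ` ?D \<sigma> \<tau>"
    by blast
  then have "2 * kendall n (\<pi> \<circ> \<sigma>) (\<pi> \<circ> \<tau>) = 2 * kendall n \<sigma> \<tau>"
    using inj by (simp add: double_kendall card_image inj_on_subset)
  then show ?thesis by simp
qed

definition reverse_tail :: "nat \<Rightarrow> nat \<Rightarrow> nat \<Rightarrow> nat" where
  "reverse_tail n k i = (if k < i \<and> i \<le> n then n + k + 1 - i else i)"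

lemma reverse_tail_involution: "reverse_tail n k (reverse_tail n k i) = i"
  by (auto simp: reverse_tail_def)

lemma reverse_tail_permutes: "reverse_tail n k permutes {1..n}"
proof (rule bij_imp_permutes)
  show "bij_betw (reverse_tail n k) {1..n} {1..n}"
    by (rule bij_betw_byWitness[where f' = "reverse_tail n k"])
      (auto simp: reverse_tail_involution, auto simp: reverse_tail_def)
qed (auto simp: reverse_tail_def)

lemma inv_reverse_tail: "inv (reverse_tail n k) = reverse_tail n k"
  by (rule inv_equality) (simp_all add: reverse_tail_involution)

lemma top_kD:
  assumes "\<sigma> \<in> top_k n k a"
  shows "\<sigma> permutes {1..n}" "i \<in> {1..k} \<Longrightarrow> \<sigma> i = a i"
  using assms by (auto simp: top_k_def)

lemma antithetic_eq_comp_reverse_tail: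
  assumes "\<sigma> \<in> top_k n k a"
  shows "antithetic n k a \<sigma> = \<sigma> \<circ> reverse_tail n k"
  using top_kD[OF assms] permutes_not_in[OF top_kD(1)[OF assms]]
  by (auto simp: antithetic_def reverse_tail_def fun_eq_iff)

lemma antithetic_in_top_k:
  assumes "\<sigma> \<in> top_k n k a"
  shows "antithetic n k a \<sigma> \<in> top_k n k a"
  using permutes_compose[OF reverse_tail_permutes top_kD(1)[OF assms]] top_kD(2)[OF assms]
  by (auto simp: antithetic_eq_comp_reverse_tail[OF assms] top_k_def reverse_tail_def)

lemma inv_antithetic:
  assumes "\<sigma> \<in> top_k n k a"
  shows "inv (antithetic n k a \<sigma>) = reverse_tail n k \<circ> inv \<sigma>"
  using permutes_bij[OF top_kD(1)[OF assms]] permutes_bij[OF reverse_tail_permutes]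
  by (simp add: antithetic_eq_comp_reverse_tail[OF assms] o_inv_distrib inv_reverse_tail)

definition unranked :: "nat \<Rightarrow> nat \<Rightarrow> (nat \<Rightarrow> nat) \<Rightarrow> nat set" where
  "unranked n k a = {1..n} - a ` {1..k}"

lemma top_k_inv_ranked:
  assumes "\<sigma> \<in> top_k n k a" "i \<in> {1..k}"
  shows "inv \<sigma> (a i) = i"
  using top_kD[OF assms(1)] assms(2) permutes_inverses(2)[OF top_kD(1)[OF assms(1)]] by metis

lemma top_k_inv_unranked:
  assumes \<sigma>: "\<sigma> \<in> top_k n k a" and z: "z \<in> unranked n k a"
  shows "inv \<sigma> z \<in> {k<..n}"
proof -
  have "inv \<sigma> z \<in> {1..n}"
    using z permutes_in_image[OF permutes_inv[OF top_kD(1)[OF \<sigma>]]] by (auto simp: unranked_def)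
  moreover have "a (inv \<sigma> z) = z" if "inv \<sigma> z \<in> {1..k}"
    using top_kD[OF \<sigma>] that permutes_inverses(1)[OF top_kD(1)[OF \<sigma>]] by metis
  ultimately show ?thesis
    using z by (force simp: unranked_def)
qed

lemma top_k_tail_unranked:
  assumes \<sigma>: "\<sigma> \<in> top_k n k a" and j: "j \<in> {k<..n}"
  shows "\<sigma> j \<in> unranked n k a"
proof -
  have "\<sigma> j \<noteq> a i" if "i \<in> {1..k}" for i
    using top_kD[OF \<sigma>] permutes_inj[OF top_kD(1)[OF \<sigma>]] that j
    by (metis inj_eq greaterThanAtMost_iff atLeastAtMost_iff not_le)
  moreover have "\<sigma> j \<in> {1..n}"
    using j permutes_in_image[OF top_kD(1)[OF \<sigma>]] by auto
  ultimately show ?thesis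
    unfolding unranked_def by blast
qed

lemma discordant_top_k_imp_unranked:
  assumes \<sigma>: "\<sigma> \<in> top_k n k a" and \<tau>: "\<tau> \<in> top_k n k a"
    and "x \<in> {1..n}" "y \<in> {1..n}" "discordant \<sigma> \<tau> x y"
  shows "x \<in> unranked n k a \<and> y \<in> unranked n k a"
proof -
  have "x \<in> unranked n k a" if x: "x \<in> {1..n}" and y: "y \<in> {1..n}"
    and disc: "discordant \<sigma> \<tau> x y" for x y
  proof (rule ccontr)
    assume "x \<notin> unranked n k a"
    then obtain i where "i \<in> {1..k}" "inv \<sigma> x = i" "inv \<tau> x = i"
      using x top_k_inv_ranked[OF \<sigma>] top_k_inv_ranked[OF \<tau>] unfolding unranked_def by blast
    moreover have "inv \<sigma> y = inv \<tau> y \<or> inv \<sigma> y \<in> {k<..n} \<and> inv \<tau> y \<in> {k<..n}"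
    proof (cases "y \<in> unranked n k a")
      case False
      then show ?thesis
        using y top_k_inv_ranked[OF \<sigma>] top_k_inv_ranked[OF \<tau>] unfolding unranked_def by force
    qed (use top_k_inv_unranked[OF \<sigma>] top_k_inv_unranked[OF \<tau>] in blast)
    ultimately show False
      using disc by (auto simp: discordant_def mult_less_0_iff)
  qed
  then show ?thesis
    using assms discordant_commute by blast
qed

lemma kendall_top_k:
  assumes "\<sigma> \<in> top_k n k a" "\<tau> \<in> top_k n k a"
  shows "kendall n \<sigma> \<tau> =
    card {(x, y). x \<in> unranked n k a \<and> y \<in> unranked n k a \<and> x < y \<and> discordant \<sigma> \<tau> x y}"
  unfolding kendall_def using discordant_top_k_imp_unranked[OF assms]
  by (intro arg_cong[where f = card]) (auto simp: unranked_def)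

lemma discordant_antithetic:
  assumes \<sigma>: "\<sigma> \<in> top_k n k a"
    and "x \<in> unranked n k a" "y \<in> unranked n k a" "x \<noteq> y"
  shows "discordant \<sigma> (antithetic n k a \<sigma>) x y"
proof -
  have "inv \<sigma> x \<noteq> inv \<sigma> y"
    using assms(4) permutes_inverses(1)[OF top_kD(1)[OF \<sigma>]] by metis
  then show ?thesis
    using top_k_inv_unranked[OF \<sigma> assms(2)] top_k_inv_unranked[OF \<sigma> assms(3)]
    by (auto simp: discordant_def inv_antithetic[OF \<sigma>] reverse_tail_def mult_less_0_iff)
qed

lemma decreasing_self_map_eq_reflection:
  fixes g :: "nat \<Rightarrow> nat"
  assumes maps: "\<And>j. j \<in> {k<..n} \<Longrightarrow> g j \<in> {k<..n}"
    and decreasing: "\<And>i j. i \<in> {k<..n} \<Longrightarrow> j \<in> {k<..n} \<Longrightarrow> i < j \<Longrightarrow> g j < g i"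
    and j: "j \<in> {k<..n}"
  shows "g j = n + k + 1 - j"
proof -
  have gap: "g (i + d) + d \<le> g i" if i: "i \<in> {k<..n}" and "i + d \<le> n" for i d
    using \<open>i + d \<le> n\<close>
  proof (induction d)
    case (Suc d)
    then have "g (i + Suc d) < g (i + d)"
      using decreasing i by auto
    with Suc show ?case by simp
  qed simp
  have "g n + (n - j) \<le> g j"
    using gap[of j "n - j"] j by simp
  moreover have "g j + (j - Suc k) \<le> g (Suc k)"
    using gap[of "Suc k" "j - Suc k"] j by simp
  ultimately show ?thesis
    using maps[of n] maps[of "Suc k"] j by auto
qed

lemma top_k_eq_antithetic:
  assumes \<sigma>: "\<sigma> \<in> top_k n k a" and \<tau>: "\<tau> \<in> top_k n k a"
    and all_discordant: "\<And>x y. x \<in> unranked n k a \<Longrightarrow> y \<in> unranked n k a \<Longrightarrow> x < y \<Longrightarrow>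
      discordant \<sigma> \<tau> x y"
  shows "\<tau> = antithetic n k a \<sigma>"
proof -
  note \<sigma>_perm = top_kD(1)[OF \<sigma>] and \<tau>_perm = top_kD(1)[OF \<tau>]
  define g where "g j = inv \<tau> (\<sigma> j)" for j
  have "g j \<in> {k<..n}" if "j \<in> {k<..n}" for j
    using top_k_inv_unranked[OF \<tau> top_k_tail_unranked[OF \<sigma> that]] by (simp add: g_def)
  moreover have "g j < g i" if ij: "i \<in> {k<..n}" "j \<in> {k<..n}" "i < j" for i j
  proof -
    have "\<sigma> i \<noteq> \<sigma> j"
      using ij permutes_inj[OF \<sigma>_perm] by (auto dest: injD)
    then have "discordant \<sigma> \<tau> (\<sigma> i) (\<sigma> j)"
      using all_discordant top_k_tail_unranked[OF \<sigma>] ij discordant_commute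
      by (metis linorder_neqE_nat)
    then show ?thesis
      using ij permutes_inverses(2)[OF \<sigma>_perm]
      by (auto simp: discordant_def g_def mult_less_0_iff)
  qed
  ultimately have reflect: "g j = n + k + 1 - j" if "j \<in> {k<..n}" for j
    using decreasing_self_map_eq_reflection that by blast
  have "\<tau> i = antithetic n k a \<sigma> i" for i
  proof -
    consider "i \<in> {1..k}" | "i \<in> {k<..n}" | "i \<notin> {1..n}" "i \<notin> {1..k}"
      by fastforce
    then show ?thesis
    proof cases
      case 1
      then show ?thesis by (simp add: top_kD(2)[OF \<tau>] antithetic_def)
    next
      case 2
      then have "n + k + 1 - i \<in> {k<..n}"
        by auto
      then have "g (n + k + 1 - i) = i"
        using 2 reflect by fastforce
      then have "\<tau> i = \<sigma> (n + k + 1 - i)"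
        using permutes_inverses(1)[OF \<tau>_perm] by (metis g_def)
      then show ?thesis
        using 2 by (simp add: antithetic_def)
    next
      case 3
      then show ?thesis
        using permutes_not_in[OF \<tau>_perm] by (auto simp: antithetic_def)
    qed
  qed
  then show ?thesis by auto
qed

lemma kendall_lt_antithetic:
  assumes \<sigma>: "\<sigma> \<in> top_k n k a" and \<tau>: "\<tau> \<in> top_k n k a" and "\<tau> \<noteq> antithetic n k a \<sigma>"
  shows "kendall n \<sigma> \<tau> < kendall n \<sigma> (antithetic n k a \<sigma>)"
proof -
  let ?U = "unranked n k a"
  let ?P = "{(x, y). x \<in> ?U \<and> y \<in> ?U \<and> x < y}"
  have "finite ?P"
    by (rule finite_subset[of _ "{1..n} \<times> {1..n}"]) (auto simp: unranked_def)
  moreover have "kendall n \<sigma> (antithetic n k a \<sigma>) = card ?P"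
    unfolding kendall_top_k[OF \<sigma> antithetic_in_top_k[OF \<sigma>]]
    by (intro arg_cong[where f = card]) (auto intro: discordant_antithetic[OF \<sigma>])
  moreover have "{(x, y). x \<in> ?U \<and> y \<in> ?U \<and> x < y \<and> discordant \<sigma> \<tau> x y} \<subset> ?P"
    using top_k_eq_antithetic[OF \<sigma> \<tau>] assms(3) by blast
  ultimately show ?thesis
    by (simp add: kendall_top_k[OF \<sigma> \<tau>] psubset_card_mono)
qed

lemma sum_top_k_kendall_independent:
  assumes \<tau>: "\<tau> \<in> top_k n k a" and \<tau>': "\<tau>' \<in> top_k n k a"
  shows "(\<Sum>\<sigma>\<in>top_k n k a. h (kendall n \<sigma> \<tau>)) = (\<Sum>\<sigma>\<in>top_k n k a. h (kendall n \<sigma> \<tau>'))"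
proof -
  let ?R = "top_k n k a"
  define \<pi> where "\<pi> = \<tau> \<circ> inv \<tau>'"
  have \<pi>: "\<pi> permutes {1..n}"
    unfolding \<pi>_def by (intro permutes_compose permutes_inv top_kD(1)[OF \<tau>] top_kD(1)[OF \<tau>'])
  have fixes_ranked: "\<pi> (a i) = a i" "inv \<pi> (a i) = a i" if "i \<in> {1..k}" for i
    using that top_k_inv_ranked[OF \<tau>'] top_kD(2)[OF \<tau>] permutes_inv_eq[OF \<pi>]
    by (simp_all add: \<pi>_def)
  have "\<pi> \<circ> \<tau>' = \<tau>"
    using permutes_inv_o(2)[OF top_kD(1)[OF \<tau>']] by (simp add: \<pi>_def comp_assoc)
  have "bij_betw ((\<circ>) \<pi>) ?R ?R"
  proof (rule bij_betw_byWitness[where f' = "(\<circ>) (inv \<pi>)"])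
    show "\<forall>\<sigma>\<in>?R. inv \<pi> \<circ> (\<pi> \<circ> \<sigma>) = \<sigma>" "\<forall>\<sigma>\<in>?R. \<pi> \<circ> (inv \<pi> \<circ> \<sigma>) = \<sigma>"
      using permutes_inv_o[OF \<pi>] by (simp_all add: o_assoc)
    show "(\<circ>) \<pi> ` ?R \<subseteq> ?R" "(\<circ>) (inv \<pi>) ` ?R \<subseteq> ?R"
      using permutes_compose[OF _ \<pi>] permutes_compose[OF _ permutes_inv[OF \<pi>]] fixes_ranked
      by (auto simp: top_k_def)
  qed
  then have "(\<Sum>\<sigma>\<in>?R. h (kendall n \<sigma> \<tau>)) = (\<Sum>\<sigma>\<in>?R. h (kendall n (\<pi> \<circ> \<sigma>) (\<pi> \<circ> \<tau>')))"
    unfolding \<open>\<pi> \<circ> \<tau>' = \<tau>\<close> by (rule sum.reindex_bij_betw[symmetric])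
  also have "\<dots> = (\<Sum>\<sigma>\<in>?R. h (kendall n \<sigma> \<tau>'))"
    using kendall_comp_left[OF \<pi> top_kD(1) top_kD(1)[OF \<tau>']] by (simp cong: sum.cong)
  finally show ?thesis .
qed

lemma norm_diff_midpoint_squared:
  fixes m u v :: "'a::real_inner"
  shows "(norm (m - (1/2) *\<^sub>R (u + v)))\<^sup>2 =
    inner m m - inner m u - inner m v + (inner u u + 2 * inner u v + inner v v) / 4"
  unfolding power2_norm_eq_inner
  by (simp add: inner_commute algebra_simps)

lemma mallows_kernel_less_iff:
  assumes "lam > 0"
  shows "mallows_kernel lam n \<sigma> \<tau> < mallows_kernel lam n \<sigma> \<tau>' \<longleftrightarrow> kendall n \<sigma> \<tau>' < kendall n \<sigma> \<tau>"
  using assms by (simp add: mallows_kernel_def)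

theorem theorem6:
  fixes lam :: real and n k :: nat and a :: "nat \<Rightarrow> nat"
    and \<phi> :: "(nat \<Rightarrow> nat) \<Rightarrow> 'h::real_inner"
    and \<sigma>1 :: "nat \<Rightarrow> nat"
  assumes lam_pos: "lam > 0"
    and kn: "k \<le> n"
    and a_inj: "inj_on a {1..k}"
    and a_range: "a ` {1..k} \<subseteq> {1..n}"
    and feat: "\<And>\<sigma> \<tau>. \<sigma> permutes {1..n} \<Longrightarrow> \<tau> permutes {1..n} \<Longrightarrow>
                  inner (\<phi> \<sigma>) (\<phi> \<tau>) = mallows_kernel lam n \<sigma> \<tau>"
    and s1: "\<sigma>1 \<in> top_k n k a"
  defines "R \<equiv> top_k n k a"
  defines "\<mu> \<equiv> (1 / real (card R)) *\<^sub>R (\<Sum>\<sigma>\<in>R. \<phi> \<sigma>)"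
  defines "f \<equiv> (\<lambda>\<sigma>2. (norm (\<mu> - (1/2) *\<^sub>R (\<phi> \<sigma>1 + \<phi> \<sigma>2)))\<^sup>2)"
  shows "antithetic n k a \<sigma>1 \<in> R
         \<and> (\<forall>\<tau>\<in>R. f (antithetic n k a \<sigma>1) \<le> f \<tau>)
         \<and> (\<forall>\<sigma>2\<in>R. (\<forall>\<tau>\<in>R. f \<sigma>2 \<le> f \<tau>) \<longrightarrow> \<sigma>2 = antithetic n k a \<sigma>1)"
proof -
  let ?A = "antithetic n k a \<sigma>1"
  have s1R: "\<sigma>1 \<in> R"
    using s1 by (simp add: R_def)
  have perm: "\<sigma> permutes {1..n}" if "\<sigma> \<in> R" for \<sigma>
    using that top_kD(1) unfolding R_def by blast
  have mean: "inner \<mu> (\<phi> \<tau>) = (\<Sum>\<sigma>\<in>R. exp (- lam * real (kendall n \<sigma> \<tau>))) / real (card R)"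
    if "\<tau> \<in> R" for \<tau>
    using feat perm that by (simp add: \<mu>_def inner_sum_left mallows_kernel_def)
  have mean_const: "inner \<mu> (\<phi> \<tau>) = inner \<mu> (\<phi> \<sigma>1)" if "\<tau> \<in> R" for \<tau>
    unfolding mean[OF that] mean[OF s1R] unfolding R_def
    by (rule sum_top_k_kendall_independent[OF that[unfolded R_def] s1, THEN arg_cong])
  have f_eq: "f \<tau> = inner \<mu> \<mu> - 2 * inner \<mu> (\<phi> \<sigma>1) + 1/2 + mallows_kernel lam n \<sigma>1 \<tau> / 2"
    if "\<tau> \<in> R" for \<tau>
    using mean_const[OF that] feat perm that s1R
    by (simp add: f_def norm_diff_midpoint_squared mallows_kernel_def kendall_self)
  have AR: "?A \<in> R"
    using antithetic_in_top_k[OF s1] by (simp add: R_def)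
  have "f ?A < f \<tau>" if \<tau>: "\<tau> \<in> R" "\<tau> \<noteq> ?A" for \<tau>
  proof -
    have "mallows_kernel lam n \<sigma>1 ?A < mallows_kernel lam n \<sigma>1 \<tau>"
      using kendall_lt_antithetic[OF s1 \<tau>[unfolded R_def]] mallows_kernel_less_iff[OF lam_pos]
      by blast
    then show ?thesis
      using f_eq \<tau>(1) AR by simp
  qed
  then show ?thesis
    using AR by (metis order.strict_implies_order not_le)
qed

end
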